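(* The universal $\mathfrak{gl}$-weight system $w_{\mathfrak{gl}}$ satisfies the generalized Vassiliev relations: its $\mathbb{C}$-linear extension to $\bigoplus_m\mathbb{C}[\mathbb{S}_m]$ vanishes on every one-hyper-arc element and every two-hyper-arc element. Equivalently, for every $N\ge1$, the linear extension of $w_{\mathfrak{gl}(N)}$ vanishes on all generalized Vassiliev elements.
   Context: For $N\ge1$, $E_{ij}$ ($1\le i,j\le N$) are the matrix units generating $\mathfrak{gl}(N)$, and for $\alpha\in\mathbb{S}_m$, $w_{\mathfrak{gl}(N)}(\alpha)=\sum_{i_1,\dots,i_m=1}^N E_{i_1i_{\alpha(1)}}E_{i_2i_{\alpha(2)}}\cdots E_{i_mi_{\alpha(m)}}\in ZU(\mathfrak{gl}(N))$ (it is central). Put $C_k^{(N)}=w_{\mathfrak{gl}(N)}((1,2,\dots,k))$. The universal $\mathfrak{gl}$-weight system is the (known to exist, and unique) function $w_{\mathfrak{gl}}:\bigsqcup_{m\ge0}\mathbb{S}_m\to\mathbb{C}[N,C_1,C_2,\dots]$ such that for every $N\ge1$ the specialization $N\mapsto N$, $C_k\mapsto C_k^{(N)}$ sends $w_{\mathfrak{gl}}(\alpha)$ to $w_{\mathfrak{gl}(N)}(\alpha)$; in particular $w_{\mathfrak{gl}}((1,\dots,m))=C_m$. Generalized Vassiliev elements: let $m\ge2$, $\gamma\in\mathbb{S}_{m-1}$, $q\in[m-1]\cup\{*\}$. For $t\in\{0,\dots,m-1\}$ let $\alpha_t\in\mathbb{S}_m$ be obtained by inserting a new point $x$ (free leg)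 into the line $1<\dots<m-1$ in the gap between $t$ and $t+1$, relabeling all points $1,\dots,m$ in order, letting the permutation act as $\gamma$ on old points except $q\mapsto x\mapsto\gamma(q)$ if $q\ne*$, and $x$ fixed if $q=*$. For a cycle $v$ of $\gamma$, $E(\gamma,q,v)=\sum_{j\in v}(\alpha_{j-1}-\alpha_j)$; one-hyper-arc if $q\ne*$, $q\in v$, two-hyper-arc otherwise. *)

theory Defs
  imports Complex_Main "HOL-Library.FuncSet" "HOL-Combinatorics.Permutations"
begin

text \<open>Words in the generators E_ij of gl(N): a letter (i,j) stands for E_ij.
  The free associative algebra on the E_ij is modelled as functions from words
  to complex coefficients (all elements used are finitely supported).\<close>

type_synonym glword = "(nat \<times> nat) list"
type_synonym freealg = "glword \<Rightarrow> complex"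

definition gl_idx :: "nat \<Rightarrow> (nat \<times> nat) set" where
  "gl_idx N = {1..N} \<times> {1..N}"

definition mono_fa :: "glword \<Rightarrow> freealg" where
  "mono_fa w = (\<lambda>u. if u = w then 1 else 0)"

definition gl_rel :: "glword \<Rightarrow> nat \<times> nat \<Rightarrow> nat \<times> nat \<Rightarrow> glword \<Rightarrow> freealg" where
  "gl_rel u a b v = (\<lambda>w.
      mono_fa (u @ [a, b] @ v) w - mono_fa (u @ [b, a] @ v) w
      - (if snd a = fst b then mono_fa (u @ [(fst a, snd b)] @ v) w else 0)
      + (if snd b = fst a then mono_fa (u @ [(fst b, snd a)] @ v) w else 0))"

text \<open>The two-sided ideal of the free algebra defining U(gl(N)); an element of the
  free algebra vanishes in U(gl(N)) iff it lies in this ideal.\<close>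
inductive_set gl_ideal :: "nat \<Rightarrow> freealg set" for N :: nat where
  zero: "(\<lambda>_. 0) \<in> gl_ideal N"
| add: "x \<in> gl_ideal N \<Longrightarrow> y \<in> gl_ideal N \<Longrightarrow> (\<lambda>w. x w + y w) \<in> gl_ideal N"
| smult: "x \<in> gl_ideal N \<Longrightarrow> (\<lambda>w. c * x w) \<in> gl_ideal N"
| gen: "set u \<subseteq> gl_idx N \<Longrightarrow> set v \<subseteq> gl_idx N \<Longrightarrow> a \<in> gl_idx N \<Longrightarrow> b \<in> gl_idx N
        \<Longrightarrow> gl_rel u a b v \<in> gl_ideal N"

text \<open>Lift of w_gl(N)(alpha) to the free algebra:
  sum over i : [m] -> [N] of the word E_{i1 i_alpha(1)} ... E_{im i_alpha(m)}.\<close>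
definition w_free :: "nat \<Rightarrow> nat \<Rightarrow> (nat \<Rightarrow> nat) \<Rightarrow> freealg" where
  "w_free N m \<alpha> = (\<lambda>w. of_nat (card
      {i \<in> {1..m} \<rightarrow>\<^sub>E {1..N}. map (\<lambda>k. (i k, i (\<alpha> k))) [1..<m+1] = w}))"

text \<open>Relabelling of old point p when the new point is inserted in the gap after t.\<close>
definition ins_gap :: "nat \<Rightarrow> nat \<Rightarrow> nat" where
  "ins_gap t p = (if p \<le> t then p else Suc p)"

text \<open>alpha_t in S_m; q = None stands for *. The new point has label t+1.\<close>
definition vass_perm :: "nat \<Rightarrow> (nat \<Rightarrow> nat) \<Rightarrow> nat option \<Rightarrow> nat \<Rightarrow> nat \<Rightarrow> nat" where
  "vass_perm m \<gamma> q t = (\<lambda>y.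
     if y = t + 1 then (case q of None \<Rightarrow> t + 1 | Some q' \<Rightarrow> ins_gap t (\<gamma> q'))
     else if y \<in> {1..m} then
       (let p = (if y \<le> t then y else y - 1) in
        if q = Some p then t + 1 else ins_gap t (\<gamma> p))
     else y)"

definition perm_cycle :: "(nat \<Rightarrow> nat) \<Rightarrow> nat \<Rightarrow> nat set" where
  "perm_cycle \<gamma> a = {(\<gamma> ^^ n) a | n. True}"

text \<open>Image in the free algebra of E(gamma,q,v) = sum_{j in v} (alpha_{j-1} - alpha_j).\<close>
definition gen_vassiliev :: "nat \<Rightarrow> nat \<Rightarrow> (nat \<Rightarrow> nat) \<Rightarrow> nat option \<Rightarrow> nat set \<Rightarrow> freealg" where
  "gen_vassiliev N m \<gamma> q v = (\<lambda>w.
     \<Sum>j\<in>v. w_free N m (vass_perm m \<gamma> q (j - 1)) w - w_free N m (vass_perm m \<gamma> q j) w)"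

end

theory Submission
  imports Defs "HOL-Library.Function_Algebras" "HOL-Combinatorics.Orbits"
begin

text \<open>Label the free leg 0 and the old points 1, ..., m-1. Then w(alpha_t) is the sum, over all
  colourings g of the points, of the word of letters E(g p, g (sigma p)) for p = 1, ..., m-1 with
  the letter E(g 0, g (sigma 0)) of the free leg inserted at position t, where sigma is gamma
  redirected through the free leg. Hence alpha_(j-1) - alpha_j swaps the free letter with the
  j-th one, and modulo the defining relations of U(gl(N)) it equals the difference of two
  contractions: one glueing the free leg in front of arc j, one glueing arc j in front of the
  free leg. Summed over a gamma-invariant set of arcs these contractions cancel: for q = * term
  by term, since the colour of the free leg is then a dummy variable; otherwise after reindexing
  j to gamma j, since the contracted diagrams then agree up to relabelling the points.\<close>

lemma sum_fun_apply: "(\<Sum>x\<in>A. (f x :: 'a \<Rightarrow> 'b::comm_monoid_add)) w = (\<Sum>x\<in>A. f x w)"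
  by (induction A rule: infinite_finite_induct) auto

lemma gl_ideal_add: "x \<in> gl_ideal N \<Longrightarrow> y \<in> gl_ideal N \<Longrightarrow> x + y \<in> gl_ideal N"
  using gl_ideal.add[of x N y] by (simp add: plus_fun_def)

lemma gl_ideal_sum: "(\<And>x. x \<in> A \<Longrightarrow> f x \<in> gl_ideal N) \<Longrightarrow> sum f A \<in> gl_ideal N"
proof (induction A rule: infinite_finite_induct)
  case (insert x F)
  then show ?case by (metis sum.insert gl_ideal_add insertCI)
qed (use gl_ideal.zero[of N] in \<open>simp_all add: zero_fun_def\<close>)

lemma bij_betw_PiE_precompose:
  assumes "bij_betw \<psi> A B"
  shows "bij_betw (\<lambda>g. restrict (g \<circ> \<psi>) A) (B \<rightarrow>\<^sub>E R) (A \<rightarrow>\<^sub>E R)"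
proof (rule bij_betwI[where g="\<lambda>i. restrict (i \<circ> inv_into A \<psi>) B"])
  show "(\<lambda>g. restrict (g \<circ> \<psi>) A) \<in> (B \<rightarrow>\<^sub>E R) \<rightarrow> (A \<rightarrow>\<^sub>E R)"
    using assms by (auto simp: bij_betw_def PiE_def Pi_def)
  show "(\<lambda>i. restrict (i \<circ> inv_into A \<psi>) B) \<in> (A \<rightarrow>\<^sub>E R) \<rightarrow> (B \<rightarrow>\<^sub>E R)"
    using assms by (auto simp: bij_betw_def PiE_def Pi_def inv_into_into)
  fix g assume "g \<in> B \<rightarrow>\<^sub>E R"
  then show "restrict (restrict (g \<circ> \<psi>) A \<circ> inv_into A \<psi>) B = g"
    using assms by (auto simp: bij_betw_def PiE_def Pi_def f_inv_into_f extensional_def fun_eq_iff)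
next
  fix i assume "i \<in> A \<rightarrow>\<^sub>E R"
  then show "restrict (restrict (i \<circ> inv_into A \<psi>) B \<circ> \<psi>) A = i"
    using assms by (auto simp: bij_betw_def PiE_def Pi_def inv_into_f_f extensional_def fun_eq_iff)
qed

definition pair_word :: "(nat \<Rightarrow> nat) \<Rightarrow> (nat \<Rightarrow> nat) \<Rightarrow> (nat \<Rightarrow> nat) \<Rightarrow> nat \<Rightarrow> glword" where
  "pair_word g s t m = map (\<lambda>p. (g (s p), g (t p))) [1..<m]"

lemma length_pair_word [simp]: "length (pair_word g s t m) = m - 1"
  by (simp add: pair_word_def)

lemma nth_pair_word: "i < m - 1 \<Longrightarrow> pair_word g s t m ! i = (g (s (Suc i)), g (t (Suc i)))"
  by (simp add: pair_word_def)

lemma set_pair_word_subset_gl_idx: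
  assumes "\<forall>p\<in>{1..<m}. s p < m \<and> t p < m" "g \<in> {0..<m} \<rightarrow>\<^sub>E {1..N}"
  shows "set (pair_word g s t m) \<subseteq> gl_idx N"
  using assms unfolding pair_word_def gl_idx_def by (auto simp: PiE_def Pi_def)

lemma pair_word_update:
  assumes j: "1 \<le> j" "j < m" and "\<forall>p. p \<noteq> j \<longrightarrow> s' p = s p" "\<forall>p. p \<noteq> j \<longrightarrow> t' p = t p"
  shows "pair_word g s' t' m
    = take (j - 1) (pair_word g s t m) @ [(g (s' j), g (t' j))] @ drop j (pair_word g s t m)"
proof -
  have "pair_word g s' t' m = (pair_word g s t m)[j - 1 := (g (s' j), g (t' j))]"
    by (rule nth_equalityI) (use assms in \<open>auto simp: nth_pair_word nth_list_update\<close>)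
  then show ?thesis
    using j by (simp add: upd_conv_take_nth_drop)
qed

definition tied_sum :: "nat \<Rightarrow> nat \<Rightarrow> (nat \<Rightarrow> nat) \<Rightarrow> (nat \<Rightarrow> nat) \<Rightarrow> nat \<Rightarrow> nat \<Rightarrow> freealg" where
  "tied_sum N m s t a b =
     (\<Sum>g\<in>{0..<m} \<rightarrow>\<^sub>E {1..N}. if g a = g b then mono_fa (pair_word g s t m) else 0)"

lemma tied_sum_commute: "tied_sum N m s t a b = tied_sum N m s t b a"
  unfolding tied_sum_def by (rule sum.cong) auto

lemma tied_sum_relabel:
  assumes "\<rho> permutes {0..<m}" "\<forall>p\<in>{1..<m}. s p < m \<and> t p < m" "a < m" "b < m"
  shows "tied_sum N m s t a b = tied_sum N m (\<rho> \<circ> s) (\<rho> \<circ> t) (\<rho> a) (\<rho> b)"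
proof -
  have bij: "bij_betw (\<lambda>g. restrict (g \<circ> \<rho>) {0..<m}) ({0..<m} \<rightarrow>\<^sub>E {1..N}) ({0..<m} \<rightarrow>\<^sub>E {1..N})"
    by (rule bij_betw_PiE_precompose) (use assms(1) permutes_imp_bij in auto)
  have "\<rho> x < m" if "x < m" for x
    using assms(1) that permutes_in_image by fastforce
  then show ?thesis
    unfolding tied_sum_def
    by (subst sum.reindex_bij_betw[OF bij, symmetric], intro sum.cong refl)
      (use assms(2-4) in \<open>auto simp: pair_word_def intro!: arg_cong[where f=mono_fa] map_cong\<close>)
qed

lemma tied_sum_cong:
  assumes "\<forall>p\<in>{1..<m}. s p = s' p \<or> (s p = a \<and> s' p = b) \<or> (s p = b \<and> s' p = a)"
    "\<forall>p\<in>{1..<m}. t p = t' p \<or> (t p = a \<and> t' p = b) \<or> (t p = b \<and> t' p = a)"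
  shows "tied_sum N m s t a b = tied_sum N m s' t' a b"
  unfolding tied_sum_def
proof (rule sum.cong[OF refl])
  fix g
  have "pair_word g s t m = pair_word g s' t' m" if "g a = g b"
    unfolding pair_word_def by (rule map_cong[OF refl]) (use assms that in force)
  then show "(if g a = g b then mono_fa (pair_word g s t m) else 0)
      = (if g a = g b then mono_fa (pair_word g s' t' m) else 0)"
    by simp
qed

text \<open>A point a that carries no letter is a dummy variable: its tie can be moved.\<close>

lemma tied_sum_retie:
  assumes "a < m" "b < m" "c < m" "a \<noteq> b" "a \<noteq> c"
    and unused: "\<forall>p\<in>{1..<m}. s p \<noteq> a \<and> t p \<noteq> a"
  shows "tied_sum N m s t a b = tied_sum N m s t a c"
proof -
  let ?P = "{0..<m} \<rightarrow>\<^sub>E {1..N}"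
  have recolour: "pair_word (g(a := z)) s t m = pair_word g s t m" for g z
    unfolding pair_word_def using unused by (auto intro!: map_cong)
  have bij: "bij_betw (\<lambda>g. g(a := g c)) {g \<in> ?P. g a = g b} {g \<in> ?P. g a = g c}"
    by (rule bij_betwI[where g="\<lambda>g. g(a := g b)"])
      (use assms in \<open>auto simp: PiE_def Pi_def extensional_def fun_eq_iff\<close>)
  have "tied_sum N m s t a b = (\<Sum>g\<in>{g \<in> ?P. g a = g b}. mono_fa (pair_word g s t m))"
    unfolding tied_sum_def by (simp add: sum.inter_filter finite_PiE)
  also have "\<dots> = (\<Sum>g\<in>{g \<in> ?P. g a = g c}. mono_fa (pair_word g s t m))"
    by (subst sum.reindex_bij_betw[OF bij, symmetric]) (simp add: recolour)
  also have "\<dots> = tied_sum N m s t a c"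
    unfolding tied_sum_def by (simp add: sum.inter_filter finite_PiE)
  finally show ?thesis .
qed

text \<open>With the free leg as point 0, every alpha_t sends the free leg to new_succ gamma q and an
  old point p to old_succ gamma q p.\<close>

definition old_succ :: "(nat \<Rightarrow> nat) \<Rightarrow> nat option \<Rightarrow> nat \<Rightarrow> nat" where
  "old_succ \<gamma> q = (case q of None \<Rightarrow> \<gamma> | Some q' \<Rightarrow> \<gamma>(q' := 0))"

definition new_succ :: "(nat \<Rightarrow> nat) \<Rightarrow> nat option \<Rightarrow> nat" where
  "new_succ \<gamma> q = (case q of None \<Rightarrow> 0 | Some q' \<Rightarrow> \<gamma> q')"

text \<open>Converts the labels of alpha_t, where the new point is t + 1, into the labels above.\<close>

definition normal_label :: "nat \<Rightarrow> nat \<Rightarrow> nat" where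
  "normal_label t y = (if y = Suc t then 0 else if y \<le> t then y else y - 1)"

definition inserted_word :: "(nat \<Rightarrow> nat) \<Rightarrow> (nat \<Rightarrow> nat) \<Rightarrow> nat option \<Rightarrow> nat \<Rightarrow> nat \<Rightarrow> glword" where
  "inserted_word g \<gamma> q m t = take t (pair_word g id (old_succ \<gamma> q) m)
     @ [(g 0, g (new_succ \<gamma> q))] @ drop t (pair_word g id (old_succ \<gamma> q) m)"

lemma permutes_in_atLeastLessThan:
  fixes m :: nat
  assumes "\<gamma> permutes {1..m-1}" "p \<in> {1..<m}"
  shows "\<gamma> p \<in> {1..<m}"
proof -
  have "{1..m-1} = {1..<m}" by auto
  then show ?thesis using assms permutes_in_image by metis
qed

lemma old_succ_less:
  assumes "\<gamma> permutes {1..m-1}" "p \<in> {1..<m}"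
  shows "old_succ \<gamma> q p < m"
  using permutes_in_atLeastLessThan[OF assms] by (cases q) (auto simp: old_succ_def)

lemma new_succ_less:
  assumes "\<gamma> permutes {1..m-1}" "\<forall>q'. q = Some q' \<longrightarrow> q' \<in> {1..m-1}" "m \<ge> 2"
  shows "new_succ \<gamma> q < m"
proof (cases q)
  case (Some q')
  then have "\<gamma> q' \<in> {1..m-1}" using assms permutes_in_image by fastforce
  then show ?thesis using Some by (auto simp: new_succ_def)
qed (use assms in \<open>simp add: new_succ_def\<close>)

lemma bij_betw_normal_label: "t < m \<Longrightarrow> bij_betw (normal_label t) {1..m} {0..<m}"
  by (rule bij_betwI[where g="\<lambda>p. if p = 0 then Suc t else ins_gap t p"])
    (auto simp: normal_label_def ins_gap_def)

lemma vass_perm_normal_label: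
  assumes \<gamma>: "\<gamma> permutes {1..m-1}" and q: "\<forall>q'. q = Some q' \<longrightarrow> q' \<in> {1..m-1}"
    and t: "t < m" and k: "k \<in> {1..m}"
  shows "vass_perm m \<gamma> q t k \<in> {1..m} \<and> normal_label t (vass_perm m \<gamma> q t k)
      = (if k = Suc t then new_succ \<gamma> q else old_succ \<gamma> q (normal_label t k))"
proof -
  have in_range: "\<gamma> p \<in> {1..m-1}" if "p \<in> {1..m-1}" for p
    using \<gamma> that permutes_in_image by fastforce
  show ?thesis
  proof (cases "k = Suc t")
    case True
    show ?thesis
    proof (cases q)
      case (Some q')
      then have "\<gamma> q' \<in> {1..m-1}" using q in_range by auto
      then show ?thesis
        using True t Some by (auto simp: vass_perm_def normal_label_def new_succ_def ins_gap_def)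
    qed (use True t in \<open>simp add: vass_perm_def normal_label_def new_succ_def\<close>)
  next
    case False
    define p where "p = (if k \<le> t then k else k - 1)"
    have p: "p \<in> {1..m-1}" and "normal_label t k = p"
      using k False t by (auto simp: p_def normal_label_def)
    moreover have "\<gamma> p \<in> {1..m-1}" using in_range p .
    moreover have "old_succ \<gamma> q p = (if q = Some p then 0 else \<gamma> p)"
      by (cases q) (auto simp: old_succ_def)
    ultimately show ?thesis
      using False k t
      by (auto simp: vass_perm_def normal_label_def ins_gap_def Let_def p_def)
  qed
qed

lemma length_inserted_word: "t < m \<Longrightarrow> length (inserted_word g \<gamma> q m t) = m"
  by (simp add: inserted_word_def)

lemma nth_inserted_word:
  assumes "i < m" "t < m"
  shows "inserted_word g \<gamma> q m t ! i = (g (normal_label t (Suc i)),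
    g (if i = t then new_succ \<gamma> q else old_succ \<gamma> q (normal_label t (Suc i))))"
  using assms by (cases i t rule: linorder_cases)
    (auto simp: inserted_word_def nth_append nth_pair_word normal_label_def min_def)

lemma w_free_eq_sum:
  "w_free N m \<alpha> = (\<Sum>i\<in>{1..m} \<rightarrow>\<^sub>E {1..N}. mono_fa (map (\<lambda>k. (i k, i (\<alpha> k))) [1..<m+1]))"
proof
  fix w
  let ?P = "{1..m} \<rightarrow>\<^sub>E {1..N}" and ?f = "\<lambda>i. map (\<lambda>k. (i k, i (\<alpha> k))) [1..<m+1]"
  have "w_free N m \<alpha> w = of_nat (card {i \<in> ?P. ?f i = w})"
    unfolding w_free_def by (simp del: upt_Suc)
  also have "\<dots> = (\<Sum>i\<in>?P. if ?f i = w then 1 else 0)"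
    by (simp add: sum.inter_filter[symmetric] finite_PiE del: upt_Suc)
  also have "\<dots> = (\<Sum>i\<in>?P. mono_fa (?f i) w)"
    by (rule sum.cong) (auto simp: mono_fa_def)
  finally show "w_free N m \<alpha> w = (\<Sum>i\<in>?P. mono_fa (?f i)) w"
    by (simp add: sum_fun_apply)
qed

lemma w_free_vass_perm:
  assumes \<gamma>: "\<gamma> permutes {1..m-1}" and q: "\<forall>q'. q = Some q' \<longrightarrow> q' \<in> {1..m-1}" and t: "t < m"
  shows "w_free N m (vass_perm m \<gamma> q t) = (\<Sum>g\<in>{0..<m} \<rightarrow>\<^sub>E {1..N}. mono_fa (inserted_word g \<gamma> q m t))"
proof -
  let ?\<alpha> = "vass_perm m \<gamma> q t" and ?g' = "\<lambda>g. restrict (g \<circ> normal_label t) {1..m}"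
  have bij: "bij_betw ?g' ({0..<m} \<rightarrow>\<^sub>E {1..N}) ({1..m} \<rightarrow>\<^sub>E {1..N})"
    by (rule bij_betw_PiE_precompose[OF bij_betw_normal_label[OF t]])
  have word: "map (\<lambda>k. (?g' g k, ?g' g (?\<alpha> k))) [1..<m+1] = inserted_word g \<gamma> q m t" for g
    by (rule nth_equalityI)
      (use t vass_perm_normal_label[OF \<gamma> q t] in \<open>auto simp: nth_inserted_word length_inserted_word
         simp del: upt_Suc\<close>)
  show ?thesis
    unfolding w_free_eq_sum
    by (subst sum.reindex_bij_betw[OF bij, symmetric]) (rule sum.cong[OF refl], simp only: word)
qed

definition contraction_into :: "nat \<Rightarrow> nat \<Rightarrow> (nat \<Rightarrow> nat) \<Rightarrow> nat option \<Rightarrow> nat \<Rightarrow> freealg" where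
  "contraction_into N m \<gamma> q j = tied_sum N m (id(j := 0)) (old_succ \<gamma> q) (new_succ \<gamma> q) j"

definition contraction_from :: "nat \<Rightarrow> nat \<Rightarrow> (nat \<Rightarrow> nat) \<Rightarrow> nat option \<Rightarrow> nat \<Rightarrow> freealg" where
  "contraction_from N m \<gamma> q j =
     tied_sum N m id ((old_succ \<gamma> q)(j := new_succ \<gamma> q)) (old_succ \<gamma> q j) 0"

definition commutator_sum :: "nat \<Rightarrow> nat \<Rightarrow> (nat \<Rightarrow> nat) \<Rightarrow> nat option \<Rightarrow> nat \<Rightarrow> freealg" where
  "commutator_sum N m \<gamma> q j = (\<Sum>g\<in>{0..<m} \<rightarrow>\<^sub>E {1..N}.
     gl_rel (take (j - 1) (pair_word g id (old_succ \<gamma> q) m)) (g 0, g (new_succ \<gamma> q))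
       (pair_word g id (old_succ \<gamma> q) m ! (j - 1)) (drop j (pair_word g id (old_succ \<gamma> q) m)))"

text \<open>With H = new_succ gamma q and T = old_succ gamma q, swapping the free letter E(g 0, g H)
  with the j-th letter E(g j, g (T j)) costs their commutator
  [g H = g j] E(g 0, g (T j)) - [g (T j) = g 0] E(g j, g H).\<close>

lemma inserted_word_swap:
  assumes j: "1 \<le> j" "j < m"
  shows "mono_fa (inserted_word g \<gamma> q m (j - 1)) - mono_fa (inserted_word g \<gamma> q m j) =
    gl_rel (take (j - 1) (pair_word g id (old_succ \<gamma> q) m)) (g 0, g (new_succ \<gamma> q))
      (pair_word g id (old_succ \<gamma> q) m ! (j - 1)) (drop j (pair_word g id (old_succ \<gamma> q) m))
    + (if g (new_succ \<gamma> q) = g j then mono_fa (pair_word g (id(j := 0)) (old_succ \<gamma> q) m) else 0)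
    - (if g (old_succ \<gamma> q j) = g 0
       then mono_fa (pair_word g id ((old_succ \<gamma> q)(j := new_succ \<gamma> q)) m) else 0)"
proof -
  let ?T = "old_succ \<gamma> q" and ?H = "new_succ \<gamma> q"
  let ?L = "pair_word g id ?T m"
  let ?u = "take (j - 1) ?L" and ?v = "drop j ?L" and ?X = "(g 0, g ?H)"
  have Lj: "?L ! (j - 1) = (g j, g (?T j))"
    using j by (simp add: nth_pair_word)
  have before: "inserted_word g \<gamma> q m (j - 1) = ?u @ [?X, ?L ! (j - 1)] @ ?v"
    using j Cons_nth_drop_Suc[of "j - 1" ?L] by (simp add: inserted_word_def)
  have after: "inserted_word g \<gamma> q m j = ?u @ [?L ! (j - 1), ?X] @ ?v"
    using j take_Suc_conv_app_nth[of "j - 1" ?L] by (simp add: inserted_word_def)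
  have into_word: "pair_word g (id(j := 0)) ?T m = ?u @ [(g 0, g (?T j))] @ ?v"
    using pair_word_update[OF j, where s'="id(j := 0)" and s=id and t'="?T" and t="?T" and g=g] by simp
  have from_word: "pair_word g id (?T(j := ?H)) m = ?u @ [(g j, g ?H)] @ ?v"
    using pair_word_update[OF j, where s'=id and s=id and t'="?T(j := ?H)" and t="?T" and g=g] by simp
  show ?thesis
    unfolding before after into_word from_word Lj by (rule ext) (simp add: gl_rel_def)
qed

lemma w_free_vass_perm_diff:
  assumes \<gamma>: "\<gamma> permutes {1..m-1}" and q: "\<forall>q'. q = Some q' \<longrightarrow> q' \<in> {1..m-1}"
    and j: "1 \<le> j" "j < m"
  shows "w_free N m (vass_perm m \<gamma> q (j - 1)) - w_free N m (vass_perm m \<gamma> q j)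
       = commutator_sum N m \<gamma> q j + contraction_into N m \<gamma> q j - contraction_from N m \<gamma> q j"
proof -
  have "j - 1 < m" using j by simp
  then have "w_free N m (vass_perm m \<gamma> q (j - 1)) - w_free N m (vass_perm m \<gamma> q j)
     = (\<Sum>g\<in>{0..<m} \<rightarrow>\<^sub>E {1..N}.
          mono_fa (inserted_word g \<gamma> q m (j - 1)) - mono_fa (inserted_word g \<gamma> q m j))"
    by (simp add: w_free_vass_perm[OF \<gamma> q] j sum_subtractf)
  also have "\<dots> = commutator_sum N m \<gamma> q j + contraction_into N m \<gamma> q j - contraction_from N m \<gamma> q j"
    unfolding inserted_word_swap[OF j] commutator_sum_def contraction_into_def contraction_from_def
      tied_sum_def
    by (simp only: sum_subtractf sum.distrib)
  finally show ?thesis .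
qed

lemma commutator_sum_in_gl_ideal:
  assumes \<gamma>: "\<gamma> permutes {1..m-1}" and q: "\<forall>q'. q = Some q' \<longrightarrow> q' \<in> {1..m-1}" and "m \<ge> 2"
    and j: "1 \<le> j" "j < m"
  shows "commutator_sum N m \<gamma> q j \<in> gl_ideal N"
  unfolding commutator_sum_def
proof (rule gl_ideal_sum)
  fix g assume g: "g \<in> {0..<m} \<rightarrow>\<^sub>E {1..N}"
  let ?L = "pair_word g id (old_succ \<gamma> q) m"
  have L: "set ?L \<subseteq> gl_idx N"
    by (rule set_pair_word_subset_gl_idx[OF _ g]) (use old_succ_less[OF \<gamma>] in auto)
  have "new_succ \<gamma> q < m" using new_succ_less[OF \<gamma> q \<open>m \<ge> 2\<close>] .
  then have "(g 0, g (new_succ \<gamma> q)) \<in> gl_idx N"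
    using g \<open>m \<ge> 2\<close> by (auto simp: gl_idx_def PiE_def Pi_def)
  moreover have "?L ! (j - 1) \<in> gl_idx N"
    using L nth_mem[of "j - 1" ?L] j by (metis length_pair_word diff_less_mono subsetD le_refl)
  moreover have "set (take (j - 1) ?L) \<subseteq> gl_idx N" "set (drop j ?L) \<subseteq> gl_idx N"
    using order_trans[OF set_take_subset L] order_trans[OF set_drop_subset L] .
  ultimately show "gl_rel (take (j - 1) ?L) (g 0, g (new_succ \<gamma> q)) (?L ! (j - 1)) (drop j ?L)
      \<in> gl_ideal N"
    by (simp add: gl_ideal.gen)
qed

lemma contraction_into_eq_from_None:
  assumes \<gamma>: "\<gamma> permutes {1..m-1}" and j: "j \<in> {1..<m}"
  shows "contraction_into N m \<gamma> None j = contraction_from N m \<gamma> None j"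
proof -
  note in_range = permutes_in_atLeastLessThan[OF \<gamma>]
  have "contraction_into N m \<gamma> None j = tied_sum N m (id(j := 0)) \<gamma> 0 j"
    by (simp add: contraction_into_def old_succ_def new_succ_def)
  also have "\<dots> = tied_sum N m id \<gamma> 0 j"
    by (rule tied_sum_cong) auto
  also have "\<dots> = tied_sum N m id \<gamma> 0 (\<gamma> j)"
    by (rule tied_sum_retie) (use j in_range in fastforce)+
  also have "\<dots> = tied_sum N m id (\<gamma>(j := 0)) 0 (\<gamma> j)"
    by (rule tied_sum_cong) auto
  also have "\<dots> = contraction_from N m \<gamma> None j"
    by (simp add: contraction_from_def old_succ_def new_succ_def tied_sum_commute)
  finally show ?thesis .
qed

text \<open>For q \<noteq> * the contractions match up along gamma: swapping the points 0 and gamma k turns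
  the diagram of contraction_into at gamma k into that of contraction_from at k, up to
  interchanging tied points and moving the tie of the then unused point 0.\<close>

lemma contraction_into_succ_eq_from:
  assumes \<gamma>: "\<gamma> permutes {1..m-1}" and q': "q' \<in> {1..<m}" and k: "k \<in> {1..<m}"
  shows "contraction_into N m \<gamma> (Some q') (\<gamma> k) = contraction_from N m \<gamma> (Some q') k"
proof -
  note in_range = permutes_in_atLeastLessThan[OF \<gamma>]
  have nonzero: "\<gamma> p = 0 \<longleftrightarrow> p = 0" for p
    using in_range[of p] permutes_not_in[OF \<gamma>, of p] by (cases "p \<in> {1..<m}") force+
  have inj: "\<gamma> x = \<gamma> y \<longleftrightarrow> x = y" for x y
    using permutes_inj[OF \<gamma>] by (auto dest: injD)
  define j where "j = \<gamma> k"
  have j: "j \<in> {1..<m}" and gq: "\<gamma> q' \<in> {1..<m}"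
    using in_range k q' by (simp_all add: j_def)
  let ?\<rho> = "Transposition.transpose 0 j"
  have \<rho>: "?\<rho> permutes {0..<m}" by (rule permutes_swap_id) (use j in auto)
  have "contraction_into N m \<gamma> (Some q') j = tied_sum N m (id(j := 0)) (\<gamma>(q' := 0)) (\<gamma> q') j"
    by (simp add: contraction_into_def old_succ_def new_succ_def)
  also have "\<dots> = tied_sum N m (?\<rho> \<circ> id(j := 0)) (?\<rho> \<circ> \<gamma>(q' := 0)) (?\<rho> (\<gamma> q')) (?\<rho> j)"
    by (rule tied_sum_relabel[OF \<rho>]) (use gq j in_range in fastforce)+
  also have "\<dots> = tied_sum N m id (\<gamma>(k := 0, q' := j)) (?\<rho> (\<gamma> q')) (?\<rho> j)"
    by (rule tied_sum_cong) (use j nonzero inj in \<open>auto simp: transpose_def j_def\<close>)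
  also have "\<dots> = contraction_from N m \<gamma> (Some q') k"
  proof (cases "k = q'")
    case True
    then show ?thesis
      by (simp add: contraction_from_def old_succ_def new_succ_def j_def transpose_def
          fun_upd_twist)
  next
    case False
    then have "\<gamma> q' \<noteq> j" using inj by (simp add: j_def)
    then have "?\<rho> (\<gamma> q') = \<gamma> q'" "?\<rho> j = 0"
      using gq by (auto simp: transpose_def)
    then have "tied_sum N m id (\<gamma>(k := 0, q' := j)) (?\<rho> (\<gamma> q')) (?\<rho> j)
        = tied_sum N m id (\<gamma>(k := \<gamma> q', q' := j)) 0 (\<gamma> q')"
      by (simp only: tied_sum_commute[of _ _ _ _ "\<gamma> q'"]) (rule tied_sum_cong, auto)
    also have "\<dots> = tied_sum N m id (\<gamma>(k := \<gamma> q', q' := j)) 0 j"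
      by (rule tied_sum_retie) (use gq j in_range in fastforce)+
    also have "\<dots> = tied_sum N m id (\<gamma>(q' := 0, k := \<gamma> q')) 0 j"
      by (rule tied_sum_cong) (use False in auto)
    also have "\<dots> = contraction_from N m \<gamma> (Some q') k"
      using False by (simp add: contraction_from_def old_succ_def new_succ_def j_def tied_sum_commute)
    finally show ?thesis .
  qed
  finally show ?thesis by (simp add: j_def)
qed

lemma sum_contraction_into_eq_sum_contraction_from:
  assumes \<gamma>: "\<gamma> permutes {1..m-1}" and q: "\<forall>q'. q = Some q' \<longrightarrow> q' \<in> {1..m-1}"
    and v: "v \<subseteq> {1..m-1}" and invariant: "\<gamma> ` v = v"
  shows "(\<Sum>j\<in>v. contraction_into N m \<gamma> q j) = (\<Sum>j\<in>v. contraction_from N m \<gamma> q j)"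
proof -
  have v_range: "j \<in> {1..<m}" if "j \<in> v" for j
    using subsetD[OF v that] by auto
  show ?thesis
  proof (cases q)
    case None
    show ?thesis
      unfolding None by (intro sum.cong refl contraction_into_eq_from_None[OF \<gamma> v_range])
  next
    case (Some q')
    have q': "q' \<in> {1..<m}" using q Some by auto
    have "(\<Sum>j\<in>v. contraction_into N m \<gamma> q j) = (\<Sum>j\<in>\<gamma> ` v. contraction_into N m \<gamma> q j)"
      by (simp only: invariant)
    also have "\<dots> = (\<Sum>k\<in>v. contraction_into N m \<gamma> q (\<gamma> k))"
      using inj_on_subset[OF permutes_inj[OF \<gamma>]] by (simp add: sum.reindex)
    also have "\<dots> = (\<Sum>k\<in>v. contraction_from N m \<gamma> q k)"
      unfolding Some by (intro sum.cong refl contraction_into_succ_eq_from[OF \<gamma> q' v_range])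
    finally show ?thesis .
  qed
qed

lemma gen_vassiliev_in_gl_ideal:
  assumes \<gamma>: "\<gamma> permutes {1..m-1}" and q: "\<forall>q'. q = Some q' \<longrightarrow> q' \<in> {1..m-1}"
    and "m \<ge> 2" and v: "v \<subseteq> {1..m-1}" and invariant: "\<gamma> ` v = v"
  shows "gen_vassiliev N m \<gamma> q v \<in> gl_ideal N"
proof -
  have j: "1 \<le> j" "j < m" if "j \<in> v" for j
    using subsetD[OF v that] by auto
  have "gen_vassiliev N m \<gamma> q v
      = (\<Sum>j\<in>v. w_free N m (vass_perm m \<gamma> q (j - 1)) - w_free N m (vass_perm m \<gamma> q j))"
    by (rule ext) (simp add: gen_vassiliev_def sum_fun_apply)
  also have "\<dots> = (\<Sum>j\<in>v. commutator_sum N m \<gamma> q j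
      + contraction_into N m \<gamma> q j - contraction_from N m \<gamma> q j)"
    by (rule sum.cong[OF refl]) (rule w_free_vass_perm_diff[OF \<gamma> q j])
  also have "\<dots> = (\<Sum>j\<in>v. commutator_sum N m \<gamma> q j)
      + ((\<Sum>j\<in>v. contraction_into N m \<gamma> q j) - (\<Sum>j\<in>v. contraction_from N m \<gamma> q j))"
    by (simp add: sum.distrib sum_subtractf)
  also have "\<dots> = (\<Sum>j\<in>v. commutator_sum N m \<gamma> q j)"
    by (simp add: sum_contraction_into_eq_sum_contraction_from[OF \<gamma> q v invariant])
  finally have "gen_vassiliev N m \<gamma> q v = (\<Sum>j\<in>v. commutator_sum N m \<gamma> q j)" .
  moreover have "(\<Sum>j\<in>v. commutator_sum N m \<gamma> q j) \<in> gl_ideal N"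
    by (intro gl_ideal_sum commutator_sum_in_gl_ideal[OF \<gamma> q \<open>m \<ge> 2\<close> j])
  ultimately show ?thesis by simp
qed

lemma image_orbit_permutation: "permutation f \<Longrightarrow> f ` orbit f a = orbit f a"
  using orbit_inverse[of a f f f] permutation_self_in_orbit permutation_orbit_step by metis

theorem theorem3:
  fixes N m a :: nat and \<gamma> :: "nat \<Rightarrow> nat" and q :: "nat option"
  assumes "N \<ge> 1" and "m \<ge> 2"
    and "\<gamma> permutes {1..m-1}"
    and "\<forall>q'. q = Some q' \<longrightarrow> q' \<in> {1..m-1}"
    and "a \<in> {1..m-1}"
  shows "gen_vassiliev N m \<gamma> q (perm_cycle \<gamma> a) \<in> gl_ideal N"
proof -
  have "permutation \<gamma>"
    using assms(3) permutation_permutes by blast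
  then have cycle: "perm_cycle \<gamma> a = orbit \<gamma> a"
    by (simp add: perm_cycle_def orbit_altdef_permutation)
  show ?thesis
    unfolding cycle
    by (rule gen_vassiliev_in_gl_ideal[OF assms(3,4,2)])
      (use permutes_orbit_subset[OF assms(3,5)] image_orbit_permutation[OF \<open>permutation \<gamma>\<close>] in auto)
qed

end
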